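(* Let $T\in\mathbb{C}^{l\times l}$ and let $\lambda_1,\dots,\lambda_k$ be $k$ distinct eigenvalues of $T$. Then for every $\gamma=(\gamma_{ij})_{1\le i<j\le k}$ with $\gamma_{ij}\in\mathbb{C}$, one has $\operatorname{rank}(Q_T(\gamma))\le kl-k$, equivalently $s_{kl-(k-1)}(Q_T(\gamma))=0$.
   Context: For $T\in\mathbb{C}^{l\times l}$, scalars $\lambda_1,\dots,\lambda_k\in\mathbb{C}$ and $\gamma=(\gamma_{ij})_{1\le i<j\le k}\in\mathbb{C}^{k(k-1)/2}$, $Q_T(\gamma)\in\mathbb{C}^{kl\times kl}$ is the $k\times k$ block upper triangular matrix whose $(i,i)$ block is $T-\lambda_i I_l$, whose $(i,j)$ block for $i<j$ is $\gamma_{ij}I_l$, and whose blocks below the diagonal are zero. $s_j(\cdot)$ denotes the $j$-th largest singular value. *)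

theory Defs
  imports "Jordan_Normal_Form.Char_Poly" "Jordan_Normal_Form.DL_Rank"
begin

text \<open>Blocks are indexed 0..k-1.\<close>
definition Q_mat :: "nat \<Rightarrow> nat \<Rightarrow> complex mat \<Rightarrow> (nat \<Rightarrow> complex) \<Rightarrow> (nat \<Rightarrow> nat \<Rightarrow> complex) \<Rightarrow> complex mat" where
  "Q_mat k l T lam gam = mat (k * l) (k * l) (\<lambda>(r, c).
     (let i = r div l; j = c div l; a = r mod l; b = c mod l in
      if i = j then T $$ (a, b) - (if a = b then lam i else 0)
      else if i < j then (if a = b then gam i j else 0)
      else 0))"

end

theory Submission
  imports Defs "Jordan_Normal_Form.Matrix_Kernel"
begin

(* For an eigenvector v of T with eigenvalue lam m, the block vector (c 0 v, ..., c (k-1) v)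
   lies in the kernel of Q_T(gamma) as soon as c i (lam m - lam i) + (sum over j > i of
   gam i j c j) = 0 for all i < k. Because the eigenvalues are distinct, this triangular system
   is solved by back substitution with c m = 1 and c i = 0 for i > m. At a row of block m where
   v is nonzero, the kernel vectors built from m' < m vanish and the one built from m does not,
   so the k kernel vectors are independent; rank-nullity then gives rank Q_T(gamma) <= kl - k. *)

lemma rank_plus_kernel_dim:
  fixes A :: "'a::field mat"
  assumes A: "A \<in> carrier_mat n nc"
  shows "vec_space.rank n A + kernel_dim A = nc"
proof -
  interpret NC: vec_space "TYPE('a)" nc .
  interpret NR: vec_space "TYPE('a)" n .
  interpret K: kernel n nc A by (unfold_locales, rule A)
  interpret LM: linear_map class_ring "module_vec TYPE('a) nc" "module_vec TYPE('a) n" "\<lambda>v. A *\<^sub>v v"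
    by unfold_locales
      (use A in \<open>auto simp: module_hom_def module_vec_simps class_ring_simps
         mult_add_distrib_mat_vec mult_mat_vec\<close>)
  have "LM.imT = NR.span (set (cols A))"
    unfolding NR.col_space_def[symmetric] NR.col_space_eq[OF A] LM.im_def
    using A by (auto simp: module_vec_simps)
  moreover have "LM.kerT = mat_kernel A"
    unfolding LM.ker_def mat_kernel_def using A by (auto simp: module_vec_simps)
  ultimately show ?thesis
    using LM.rank_nullity_main(1)[OF NC.fin_dim]
    unfolding NR.rank_def K.kernel_dim NC.dim_is_n by simp
qed

lemma distinct_cols_if_injective:
  fixes W :: "'a::ring_1 mat"
  assumes W: "W \<in> carrier_mat n k"
    and inj: "\<And>x. x \<in> carrier_vec k \<Longrightarrow> W *\<^sub>v x = 0\<^sub>v n \<Longrightarrow> x = 0\<^sub>v k"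
  shows "distinct (cols W)"
  unfolding distinct_conv_nth
proof (intro allI impI)
  fix i j assume "i < length (cols W)" "j < length (cols W)" "i \<noteq> j"
  then have i: "i < k" and j: "j < k" and "i \<noteq> j" using W by auto
  have col: "W *\<^sub>v unit_vec k m = col W m" if "m < k" for m
    using W that by (intro eq_vecI) auto
  have "W *\<^sub>v (unit_vec k i - unit_vec k j) = col W i - col W j"
    using W i j by (simp add: mult_minus_distrib_mat_vec[OF W] col)
  moreover have "(unit_vec k i - unit_vec k j) $ i = (1 :: 'a)"
    using i j \<open>i \<noteq> j\<close> by simp
  then have "unit_vec k i - unit_vec k j \<noteq> (0\<^sub>v k :: 'a vec)"
    using i by (metis index_zero_vec(1) zero_neq_one)
  ultimately have "col W i \<noteq> col W j"
    using inj[of "unit_vec k i - unit_vec k j"] W by auto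
  then show "cols W ! i \<noteq> cols W ! j" using W i j by simp
qed

lemma dim_col_le_kernel_dim:
  fixes A :: "'a::field mat"
  assumes A: "A \<in> carrier_mat n nc" and W: "W \<in> carrier_mat nc k"
    and ker: "set (cols W) \<subseteq> mat_kernel A"
    and inj: "\<And>x. x \<in> carrier_vec k \<Longrightarrow> W *\<^sub>v x = 0\<^sub>v nc \<Longrightarrow> x = 0\<^sub>v k"
  shows "k \<le> kernel_dim A"
proof -
  interpret NC: vec_space "TYPE('a)" nc .
  interpret K: kernel n nc A by (unfold_locales, rule A)
  have dist: "distinct (cols W)" by (rule distinct_cols_if_injective[OF W inj])
  have "NC.lin_indpt (set (cols W))"
    using NC.lin_depE[OF W _ dist] inj by metis
  then have "K.lin_indpt (set (cols W))" using K.lindep_same[OF ker] by simp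
  moreover obtain B where "finite B" "K.basis B" using kernel_basis_exists[OF A] by blast
  then have "K.Ker.fin_dim" unfolding K.Ker.fin_dim_def K.Ker.basis_def by blast
  ultimately have "card (set (cols W)) \<le> K.dim" using K.Ker.li_le_dim(2)[OF _ ker] by blast
  moreover have "card (set (cols W)) = k" using distinct_card[OF dist] W by simp
  ultimately show ?thesis by simp
qed

lemma upper_triangular_mult_vec_eq_0:
  fixes S :: "'a::field mat"
  assumes S: "S \<in> carrier_mat k k" and "upper_triangular S"
    and diag: "\<And>i. i < k \<Longrightarrow> S $$ (i, i) \<noteq> 0"
    and x: "x \<in> carrier_vec k" and Sx: "S *\<^sub>v x = 0\<^sub>v k"
  shows "x = 0\<^sub>v k"
proof -
  have "det S = prod_list (diag_mat S)" by (rule det_upper_triangular[OF assms(2) S])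
  also have "\<dots> \<noteq> 0" using S diag by (auto simp: diag_mat_def prod_list_zero_iff)
  finally show ?thesis using det_0_iff_vec_prod_zero_field[OF S] x Sx by blast
qed

lemma injective_if_upper_triangular_rows:
  fixes W :: "'a::field mat"
  assumes W: "W \<in> carrier_mat n k"
    and rows: "\<And>m. m < k \<Longrightarrow> r m < n"
    and zero: "\<And>m m'. m' < m \<Longrightarrow> m < k \<Longrightarrow> W $$ (r m, m') = 0"
    and diag: "\<And>m. m < k \<Longrightarrow> W $$ (r m, m) \<noteq> 0"
    and x: "x \<in> carrier_vec k" and Wx: "W *\<^sub>v x = 0\<^sub>v n"
  shows "x = 0\<^sub>v k"
proof (rule upper_triangular_mult_vec_eq_0)
  let ?S = "mat k k (\<lambda>(m, m'). W $$ (r m, m'))"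
  show "?S \<in> carrier_mat k k" "upper_triangular ?S"
    using zero by (auto simp: upper_triangular_def)
  show "?S $$ (m, m) \<noteq> 0" if "m < k" for m using diag that by simp
  have "(?S *\<^sub>v x) $ m = (W *\<^sub>v x) $ r m" if "m < k" for m
    using W x that rows[OF that] by (simp add: scalar_prod_def)
  then show "?S *\<^sub>v x = 0\<^sub>v k" using Wx rows by (intro eq_vecI) auto
qed (fact x)

function back_subst :: "nat \<Rightarrow> (nat \<Rightarrow> 'a::field) \<Rightarrow> (nat \<Rightarrow> nat \<Rightarrow> 'a) \<Rightarrow> nat \<Rightarrow> nat \<Rightarrow> 'a" where
  "back_subst k lam gam m i =
    (if m < i then 0 else if i = m then 1
     else - (\<Sum>j\<in>{i<..<k}. gam i j * back_subst k lam gam m j) / (lam m - lam i))"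
  by pat_completeness auto
termination by (relation "measure (\<lambda>(k, lam, gam, m, i). m - i)") auto

declare back_subst.simps [simp del]

lemma back_subst_above [simp]: "m < i \<Longrightarrow> back_subst k lam gam m i = 0"
  by (simp add: back_subst.simps)

lemma back_subst_diag [simp]: "back_subst k lam gam m m = 1"
  by (simp add: back_subst.simps)

lemma back_subst_solves:
  assumes "inj_on lam {..<k}" and "m < k" and "i < k"
  shows "back_subst k lam gam m i * (lam m - lam i)
    + (\<Sum>j\<in>{i<..<k}. gam i j * back_subst k lam gam m j) = 0"
proof (cases m i rule: linorder_cases)
  case less
  then show ?thesis by simp
next
  case equal
  then show ?thesis by simp
next
  case greater
  then have "lam m \<noteq> lam i" using assms by (auto dest: inj_onD)
  then show ?thesis using greater by (subst (1) back_subst.simps) (simp add: field_simps)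
qed

lemma sum_lessThan_mult_blocks:
  fixes k l :: nat
  shows "(\<Sum>r<k * l. f r) = (\<Sum>j<k. \<Sum>b<l. f (j * l + b))"
proof (induction k)
  case (Suc k)
  have "(\<Sum>r<Suc k * l. f r) = (\<Sum>r<k * l. f r) + (\<Sum>r\<in>{k * l..<k * l + l}. f r)"
    by (simp add: add.commute sum.atLeastLessThan_concat[symmetric] lessThan_atLeast0)
  also have "(\<Sum>r\<in>{k * l..<k * l + l}. f r) = (\<Sum>b<l. f (k * l + b))"
    using sum.shift_bounds_nat_ivl[of f 0 "k * l" l] by (simp add: lessThan_atLeast0 ac_simps)
  finally show ?case using Suc by simp
qed simp

lemma block_index_less:
  fixes i k a l :: nat
  assumes "i < k" "a < l"
  shows "i * l + a < k * l"
proof -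
  have "i * l + a < Suc i * l" using assms by simp
  also have "\<dots> \<le> k * l" using assms by (intro mult_le_mono1) simp
  finally show ?thesis .
qed

definition block_vec :: "nat \<Rightarrow> nat \<Rightarrow> (nat \<Rightarrow> 'a vec) \<Rightarrow> 'a vec" where
  "block_vec k l x = vec (k * l) (\<lambda>r. x (r div l) $ (r mod l))"

lemma index_block_vec [simp]:
  "i < k \<Longrightarrow> a < l \<Longrightarrow> block_vec k l x $ (i * l + a) = x i $ a"
  "dim_vec (block_vec k l x) = k * l"
  by (simp_all add: block_vec_def block_index_less)

lemma Q_mat_carrier [simp]:
  "Q_mat k l T lam gam \<in> carrier_mat (k * l) (k * l)"
  "dim_row (Q_mat k l T lam gam) = k * l"
  "dim_col (Q_mat k l T lam gam) = k * l"
  by (simp_all add: Q_mat_def)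

lemma index_Q_mat:
  assumes "i < k" "a < l" "j < k" "b < l"
  shows "Q_mat k l T lam gam $$ (i * l + a, j * l + b) =
    (if i = j then T $$ (a, b) - (if a = b then lam i else 0)
     else if i < j then (if a = b then gam i j else 0) else 0)"
  using assms by (simp add: Q_mat_def block_index_less)

lemma Q_mat_block_row_sum:
  assumes T: "T \<in> carrier_mat l l" and y: "y \<in> carrier_vec l"
    and "i < k" "a < l" "j < k"
  shows "(\<Sum>b<l. Q_mat k l T lam gam $$ (i * l + a, j * l + b) * y $ b) =
    (if j = i then (T *\<^sub>v y) $ a - lam i * y $ a else if i < j then gam i j * y $ a else 0)"
proof -
  have "(\<Sum>b<l. Q_mat k l T lam gam $$ (i * l + a, j * l + b) * y $ b) =
    (\<Sum>b<l. (if j = i then T $$ (a, b) * y $ b else 0)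
      - (if a = b then (if j = i then lam i else if i < j then - gam i j else 0) * y $ b else 0))"
    using assms by (intro sum.cong) (auto simp: index_Q_mat left_diff_distrib)
  also have "\<dots> = (if j = i then (T *\<^sub>v y) $ a - lam i * y $ a else if i < j then gam i j * y $ a else 0)"
    using assms by (simp add: sum_subtractf scalar_prod_def lessThan_atLeast0 sum.If_cases)
  finally show ?thesis .
qed

lemma index_Q_mat_mult_block_vec:
  assumes T: "T \<in> carrier_mat l l" and x: "\<And>j. j < k \<Longrightarrow> x j \<in> carrier_vec l"
    and i: "i < k" and a: "a < l"
  shows "(Q_mat k l T lam gam *\<^sub>v block_vec k l x) $ (i * l + a) =
    (T *\<^sub>v x i) $ a - lam i * x i $ a + (\<Sum>j\<in>{i<..<k}. gam i j * x j $ a)"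
proof -
  have "(Q_mat k l T lam gam *\<^sub>v block_vec k l x) $ (i * l + a) =
    (\<Sum>r<k * l. Q_mat k l T lam gam $$ (i * l + a, r) * block_vec k l x $ r)"
    using i a by (simp add: block_index_less scalar_prod_def lessThan_atLeast0)
  also have "\<dots> = (\<Sum>j<k. \<Sum>b<l. Q_mat k l T lam gam $$ (i * l + a, j * l + b) * x j $ b)"
    by (simp add: sum_lessThan_mult_blocks)
  also have "\<dots> = (\<Sum>j<k. (if j = i then (T *\<^sub>v x i) $ a - lam i * x i $ a else 0)
      + (if i < j then gam i j * x j $ a else 0))"
    using T x i a by (intro sum.cong) (auto simp: Q_mat_block_row_sum)
  also have "\<dots> = (T *\<^sub>v x i) $ a - lam i * x i $ a + (\<Sum>j\<in>{i<..<k}. gam i j * x j $ a)"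
    using i by (simp add: sum.distrib sum.inter_filter[symmetric]) (intro sum.cong; auto)
  finally show ?thesis .
qed

lemma Q_mat_mult_eigen_block_vec:
  assumes T: "T \<in> carrier_mat l l" and v: "v \<in> carrier_vec l" and ev: "T *\<^sub>v v = mu \<cdot>\<^sub>v v"
    and sol: "\<And>i. i < k \<Longrightarrow> c i * (mu - lam i) + (\<Sum>j\<in>{i<..<k}. gam i j * c j) = 0"
  shows "Q_mat k l T lam gam *\<^sub>v block_vec k l (\<lambda>j. c j \<cdot>\<^sub>v v) = 0\<^sub>v (k * l)"
proof (rule eq_vecI)
  fix r assume "r < dim_vec (0\<^sub>v (k * l) :: complex vec)"
  then have r: "r < k * l" by simp
  define i a where "i = r div l" and "a = r mod l"
  have "0 < l" using r by (cases l) auto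
  then have i: "i < k" and a: "a < l" and ria: "r = i * l + a"
    using r by (auto simp: i_def a_def less_mult_imp_div_less)
  have "(Q_mat k l T lam gam *\<^sub>v block_vec k l (\<lambda>j. c j \<cdot>\<^sub>v v)) $ r =
    c i * (mu * v $ a) - lam i * (c i * v $ a) + (\<Sum>j\<in>{i<..<k}. gam i j * (c j * v $ a))"
    unfolding ria using T v ev i a
    by (simp add: index_Q_mat_mult_block_vec mult_mat_vec)
  also have "\<dots> = v $ a * (c i * (mu - lam i) + (\<Sum>j\<in>{i<..<k}. gam i j * c j))"
    by (simp add: algebra_simps sum_distrib_left)
  finally show "(Q_mat k l T lam gam *\<^sub>v block_vec k l (\<lambda>j. c j \<cdot>\<^sub>v v)) $ r = 0\<^sub>v (k * l) $ r"
    using sol[OF i] r by simp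
qed simp

lemma eigenvector_nonzero_entry:
  assumes "A \<in> carrier_mat n n" and "eigenvector A v mu"
  obtains p where "p < n" and "v $ p \<noteq> 0"
proof -
  have "v \<in> carrier_vec n" and "v \<noteq> 0\<^sub>v n" using assms by (auto simp: eigenvector_def)
  then show ?thesis using that by (metis eq_vecI carrier_vecD index_zero_vec)
qed

lemma kernel_dim_Q_mat_ge:
  assumes T: "T \<in> carrier_mat l l" and inj: "inj_on lam {..<k}"
    and ev: "\<forall>i<k. eigenvalue T (lam i)"
  shows "k \<le> kernel_dim (Q_mat k l T lam gam)"
proof -
  have "\<exists>v p. eigenvector T v (lam m) \<and> p < l \<and> v $ p \<noteq> 0" if "m < k" for m
    using ev that eigenvector_nonzero_entry[OF T] by (metis eigenvalue_def)
  then obtain v p where eig: "\<And>m. m < k \<Longrightarrow> eigenvector T (v m) (lam m)"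
    and p: "\<And>m. m < k \<Longrightarrow> p m < l" "\<And>m. m < k \<Longrightarrow> v m $ p m \<noteq> 0"
    by metis
  have v: "v m \<in> carrier_vec l" "T *\<^sub>v v m = lam m \<cdot>\<^sub>v v m" if "m < k" for m
    using eig[OF that] T by (auto simp: eigenvector_def)
  define w where "w m = block_vec k l (\<lambda>i. back_subst k lam gam m i \<cdot>\<^sub>v v m)" for m
  define W where "W = mat_of_cols (k * l) (map w [0..<k])"
  have w: "w m \<in> carrier_vec (k * l)" for m by (simp add: w_def carrier_vecI)
  have W: "W \<in> carrier_mat (k * l) k"
    using mat_of_cols_carrier(1)[of "k * l" "map w [0..<k]"] by (simp add: W_def)
  have W_entry: "W $$ (i * l + a, m) = back_subst k lam gam m i * v m $ a"
    if "i < k" "a < l" "m < k" for i a m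
    using that v(1)[OF that(3)] by (simp add: W_def mat_of_cols_def w_def block_index_less)
  have "set (cols W) \<subseteq> mat_kernel (Q_mat k l T lam gam)"
  proof
    fix u assume "u \<in> set (cols W)"
    moreover have "cols W = map w [0..<k]" unfolding W_def using w by (intro cols_mat_of_cols) auto
    ultimately obtain m where m: "m < k" and u: "u = w m" by auto
    show "u \<in> mat_kernel (Q_mat k l T lam gam)"
      unfolding u w_def
      by (rule mat_kernelI[OF Q_mat_carrier(1) _ Q_mat_mult_eigen_block_vec])
        (use T v m back_subst_solves[OF inj m] in \<open>auto intro: carrier_vecI\<close>)
  qed
  moreover have "x = 0\<^sub>v k" if "x \<in> carrier_vec k" "W *\<^sub>v x = 0\<^sub>v (k * l)" for x
    using injective_if_upper_triangular_rows[OF W, of "\<lambda>m. m * l + p m"] that p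
    by (simp add: W_entry block_index_less)
  ultimately show ?thesis by (rule dim_col_le_kernel_dim[OF Q_mat_carrier(1) W])
qed

theorem mainTheorem2:
  fixes T :: "complex mat" and l k :: nat
    and lam :: "nat \<Rightarrow> complex" and gam :: "nat \<Rightarrow> nat \<Rightarrow> complex"
  assumes "T \<in> carrier_mat l l"
    and "inj_on lam {..<k}"
    and "\<forall>i<k. eigenvalue T (lam i)"
  shows "vec_space.rank (k * l) (Q_mat k l T lam gam) \<le> k * l - k"
proof -
  have "k \<le> kernel_dim (Q_mat k l T lam gam)" by (rule kernel_dim_Q_mat_ge[OF assms])
  moreover have "vec_space.rank (k * l) (Q_mat k l T lam gam) + kernel_dim (Q_mat k l T lam gam) = k * l"
    by (rule rank_plus_kernel_dim[OF Q_mat_carrier(1)])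
  ultimately show ?thesis by simp
qed

end
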